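(* Let $\mu>0$ and let $f:[0,1]\to\mathbb{R}$ be bounded. Then $\lim_{n\to+\infty}\mathscr{L}_n^K f(x)=f(x)$ at every point $x\in[0,1]$ at which $f$ is continuous. Moreover, for every $f\in C([0,1])$, $\mathscr{L}_n^K f(x)\to f(x)$ as $n\to+\infty$ uniformly for $x\in[0,1]$.
   Context: Fix $\mu>0$. Let $\ln_\mu(x):=\ln(1+\mu+x)$ for $x\in[0,1]$, and for $f:[0,1]\to\mathbb{R}$ let $f_\mu(x):=f(x)/\ln_\mu(x)$. Let $p_{n,k}(y):=\binom{n}{k}y^k(1-y)^{n-k}$ and $a_{n+1}(x):=\dfrac{\ln\left(1+\frac{x}{(n+1)(1+\mu)}\right)}{\ln\left(1+\frac{1}{(n+1)(1+\mu)}\right)}$, $x\in[0,1]$. For $n\in\mathbb{N}$ define $\mathscr{L}_n^K f(x):=\ln_\mu(x)\sum_{k=0}^n p_{n,k}(a_{n+1}(x))\,(n+1)\int_{k/(n+1)}^{(k+1)/(n+1)} f_\mu(t)\,dt$, $x\in[0,1]$. *)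

theory Defs
  imports "HOL-Analysis.Analysis"
begin

definition ln_mu :: "real \<Rightarrow> real \<Rightarrow> real" where
  "ln_mu \<mu> x = ln (1 + \<mu> + x)"

definition f_mu :: "real \<Rightarrow> (real \<Rightarrow> real) \<Rightarrow> real \<Rightarrow> real" where
  "f_mu \<mu> f x = f x / ln_mu \<mu> x"

definition bern :: "nat \<Rightarrow> nat \<Rightarrow> real \<Rightarrow> real" where
  "bern n k y = real (n choose k) * y ^ k * (1 - y) ^ (n - k)"

definition a_seq :: "real \<Rightarrow> nat \<Rightarrow> real \<Rightarrow> real" where
  "a_seq \<mu> m x = ln (1 + x / (real m * (1 + \<mu>))) / ln (1 + 1 / (real m * (1 + \<mu>)))"

definition KL :: "real \<Rightarrow> nat \<Rightarrow> (real \<Rightarrow> real) \<Rightarrow> real \<Rightarrow> real" where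
  "KL \<mu> n f x = ln_mu \<mu> x * (\<Sum>k=0..n. bern n k (a_seq \<mu> (n+1) x) *
      (real (n+1) * integral {real k / real (n+1) .. real (k+1) / real (n+1)} (f_mu \<mu> f)))"

end

theory Submission
  imports Defs
begin

text \<open>
  The operator factors as \<open>L_n^K f (x) = ln_\<mu>(x) \<cdot> K_n (f_\<mu>) (a_{n+1}(x))\<close>, where \<open>K_n\<close> is
  the classical Kantorovich operator. Concavity of \<open>ln\<close> and \<open>ln (1 + t) \<ge> t / (1 + t)\<close>
  squeeze \<open>a_{n+1}(x)\<close> between \<open>x\<close> and \<open>x + 1/(n+1)\<close>, and \<open>ln_\<mu>\<close> lies between the positive
  constants \<open>ln (1 + \<mu>)\<close> and \<open>ln (2 + \<mu>)\<close>; so it suffices to show \<open>K_n h (y) \<rightarrow> h (x)\<close> for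
  \<open>h = f_\<mu>\<close> and \<open>|y - x| \<le> 1/(n+1)\<close>. The averages of \<open>h\<close> over the cells near \<open>x\<close> are close
  to \<open>h (x)\<close> by continuity, while the total Bernstein weight of the far cells is controlled
  by the second moment \<open>\<Sum>_k (y - k/n)\<^sup>2 p_{n,k}(y) = y (1 - y) / n\<close>. The resulting bound is
  uniform over any set of points at which \<open>f_\<mu>\<close> is equicontinuous: a single point of
  continuity gives the pointwise claim, uniform continuity on \<open>[0,1]\<close> the uniform one.
\<close>

lemma ln_one_plus_ratio_ge:
  fixes t x :: real
  assumes "0 < t" "0 \<le> x" "x \<le> 1"
  shows "x \<le> ln (1 + t * x) / ln (1 + t)"
proof -
  have "(1 - x) * ln 1 + x * ln (1 + t) \<le> ln ((1 - x) * 1 + x * (1 + t))"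
    using concave_onD[OF ln_concave, of x 1 "1 + t"] assms by simp
  then have "x * ln (1 + t) \<le> ln (1 + t * x)"
    by (simp add: algebra_simps)
  then show ?thesis
    using assms by (simp add: le_divide_eq)
qed

lemma ln_one_plus_ratio_le:
  fixes t x :: real
  assumes "0 < t" "0 \<le> x"
  shows "ln (1 + t * x) / ln (1 + t) \<le> (1 + t) * x"
proof -
  have "t \<le> (1 + t) * ln (1 + t)"
    using ln_le_minus_one[of "1 / (1 + t)"] assms by (simp add: ln_div field_simps)
  then have "t * x \<le> (1 + t) * x * ln (1 + t)"
    using assms mult_right_mono by (fastforce simp: algebra_simps)
  moreover have "ln (1 + t * x) \<le> t * x"
    using assms by (intro ln_add_one_self_le_self) simp
  ultimately show ?thesis
    using assms by (simp add: divide_le_eq)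
qed

lemma interval_average_dev_le:
  fixes h :: "real \<Rightarrow> real"
  assumes "a < b" and "h integrable_on {a..b}" and "\<And>t. t \<in> {a..b} \<Longrightarrow> \<bar>h t - c\<bar> \<le> \<epsilon>"
  shows "\<bar>integral {a..b} h / (b - a) - c\<bar> \<le> \<epsilon>"
proof -
  have "0 \<le> \<epsilon>"
    using assms(1) assms(3)[of a] by force
  have "((\<lambda>t. h t - c) has_integral (integral {a..b} h - (b - a) * c)) {a..b}"
    using has_integral_diff[OF integrable_integral[OF assms(2)] has_integral_const_real]
      assms(1) by simp
  from has_integral_bound_real[OF \<open>0 \<le> \<epsilon>\<close> finite.emptyI this]
  have "\<bar>integral {a..b} h - (b - a) * c\<bar> \<le> \<epsilon> * (b - a)"
    using assms(1,3) by simp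
  then show ?thesis
    using assms(1) by (simp add: abs_le_iff divide_simps algebra_simps)
qed

lemma sum_sq_dist_Bernstein:
  assumes "n > 0"
  shows "(\<Sum>k\<le>n. (x - real k / real n)\<^sup>2 * Bernstein n k x) = x * (1 - x) / real n"
proof -
  have "(x - real k / real n)\<^sup>2 * Bernstein n k x =
        x\<^sup>2 * Bernstein n k x - (2 * x / real n) * (real k * Bernstein n k x)
        + (real k * (real k - 1) * Bernstein n k x) / (real n)\<^sup>2
        + (real k * Bernstein n k x) / (real n)\<^sup>2" for k
    using assms by (simp add: field_simps power2_eq_square)
  then have "(\<Sum>k\<le>n. (x - real k / real n)\<^sup>2 * Bernstein n k x) =
        x\<^sup>2 - (2 * x / real n) * (real n * x) + real n * (real n - 1) * x\<^sup>2 / (real n)\<^sup>2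
        + real n * x / (real n)\<^sup>2"
    by (simp add: sum.distrib sum_subtractf flip: sum_distrib_left sum_divide_distrib)
  also have "\<dots> = x * (1 - x) / real n"
    using assms by (simp add: field_simps power2_eq_square)
  finally show ?thesis .
qed

lemma Bernstein_sum_localized_bound:
  fixes d :: "nat \<Rightarrow> real"
  assumes y: "0 \<le> y" "y \<le> 1" and "n > 0" "\<eta> > 0" "0 \<le> \<epsilon>"
    and bound: "\<And>k. k \<le> n \<Longrightarrow> \<bar>d k\<bar> \<le> D"
    and near: "\<And>k. k \<le> n \<Longrightarrow> \<bar>y - real k / real n\<bar> < \<eta> \<Longrightarrow> \<bar>d k\<bar> \<le> \<epsilon>"
  shows "\<bar>\<Sum>k\<le>n. Bernstein n k y * d k\<bar> \<le> \<epsilon> + D / (4 * \<eta>\<^sup>2 * real n)"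
proof -
  have "0 \<le> D"
    using bound[of 0] by simp
  have split: "\<bar>d k\<bar> \<le> \<epsilon> + D / \<eta>\<^sup>2 * (y - real k / real n)\<^sup>2" if "k \<le> n" for k
  proof (cases "\<bar>y - real k / real n\<bar> < \<eta>")
    case True
    then show ?thesis
      using near[OF that] \<open>0 \<le> D\<close> by (simp add: add_increasing2)
  next
    case False
    then have "\<eta>\<^sup>2 \<le> (y - real k / real n)\<^sup>2"
      using \<open>\<eta> > 0\<close> by (metis abs_le_square_iff abs_of_pos not_less)
    then have "D \<le> D / \<eta>\<^sup>2 * (y - real k / real n)\<^sup>2"
      using \<open>0 \<le> D\<close> \<open>\<eta> > 0\<close> by (simp add: field_simps mult_left_mono)
    then show ?thesis
      using bound[OF that] \<open>0 \<le> \<epsilon>\<close> by linarith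
  qed
  have "\<bar>\<Sum>k\<le>n. Bernstein n k y * d k\<bar> \<le> (\<Sum>k\<le>n. Bernstein n k y * \<bar>d k\<bar>)"
    using sum_abs[of "\<lambda>k. Bernstein n k y * d k"] Bernstein_nonneg[OF y]
    by (simp add: abs_mult)
  also have "\<dots> \<le> (\<Sum>k\<le>n. Bernstein n k y * (\<epsilon> + D / \<eta>\<^sup>2 * (y - real k / real n)\<^sup>2))"
    using split Bernstein_nonneg[OF y] by (intro sum_mono mult_left_mono) auto
  also have "\<dots> = \<epsilon> * (\<Sum>k\<le>n. Bernstein n k y)
      + D / \<eta>\<^sup>2 * (\<Sum>k\<le>n. (y - real k / real n)\<^sup>2 * Bernstein n k y)"
    by (simp add: algebra_simps sum.distrib sum_distrib_left del: sum_Bernstein)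
  also have "\<dots> = \<epsilon> + D / \<eta>\<^sup>2 * (y * (1 - y) / real n)"
    by (simp add: sum_sq_dist_Bernstein[OF \<open>n > 0\<close>])
  also have "\<dots> \<le> \<epsilon> + D / \<eta>\<^sup>2 * ((1 / 4) / real n)"
  proof -
    have "y * (1 - y) \<le> 1 / 4"
      using zero_le_power2[of "y - 1 / 2"] by (simp add: power2_eq_square algebra_simps)
    then show ?thesis
      using \<open>0 \<le> D\<close> \<open>n > 0\<close> by (intro add_left_mono mult_left_mono divide_right_mono) auto
  qed
  also have "\<dots> = \<epsilon> + D / (4 * \<eta>\<^sup>2 * real n)"
    by simp
  finally show ?thesis .
qed

definition kantorovich_cell :: "nat \<Rightarrow> nat \<Rightarrow> real set" where
  "kantorovich_cell n k = {real k / real (n + 1) .. real (k + 1) / real (n + 1)}"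

definition kantorovich :: "nat \<Rightarrow> (real \<Rightarrow> real) \<Rightarrow> real \<Rightarrow> real" where
  "kantorovich n h y =
     (\<Sum>k\<le>n. Bernstein n k y * (real (n + 1) * integral (kantorovich_cell n k) h))"

lemma kantorovich_cell_subset:
  assumes "k \<le> n"
  shows "kantorovich_cell n k \<subseteq> {0..1}"
  using assms by (auto simp: kantorovich_cell_def field_simps)

lemma kantorovich_cell_dist:
  assumes "k \<le> n" "n > 0" "t \<in> kantorovich_cell n k"
  shows "\<bar>t - real k / real n\<bar> \<le> 1 / real (n + 1)"
proof -
  note t = assms(3)[unfolded kantorovich_cell_def]
  have "real k / real n - real k / real (n + 1) = (real k / real n) / real (n + 1)"
    using assms(2) by (simp add: field_simps)
  also have "\<dots> \<le> 1 / real (n + 1)"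
    using assms(1,2) by (intro divide_right_mono) (auto simp: divide_le_eq_1)
  finally have "real k / real n - t \<le> 1 / real (n + 1)"
    using t by simp
  moreover have "real (k + 1) / real (n + 1) - 1 / real (n + 1) = real k / real (n + 1)"
    by (simp flip: diff_divide_distrib)
  moreover have "real k / real (n + 1) \<le> real k / real n"
    using assms(2) by (intro divide_left_mono) auto
  ultimately show ?thesis
    using t by (simp add: abs_le_iff)
qed

lemma kantorovich_coeff_dev_le:
  fixes h :: "real \<Rightarrow> real"
  assumes "k \<le> n" and "h integrable_on {0..1}"
    and "\<And>t. t \<in> kantorovich_cell n k \<Longrightarrow> \<bar>h t - c\<bar> \<le> \<epsilon>"
  shows "\<bar>real (n + 1) * integral (kantorovich_cell n k) h - c\<bar> \<le> \<epsilon>"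
proof -
  have "h integrable_on {real k / real (n + 1) .. real (k + 1) / real (n + 1)}"
    using kantorovich_cell_subset[OF assms(1)] unfolding kantorovich_cell_def
    by (rule integrable_on_subinterval[OF assms(2)])
  from interval_average_dev_le[OF _ this assms(3)[unfolded kantorovich_cell_def]]
  show ?thesis
    by (simp add: kantorovich_cell_def field_simps)
qed

lemma kantorovich_dev_le:
  fixes h :: "real \<Rightarrow> real"
  assumes hint: "h integrable_on {0..1}" and hM: "\<And>t. t \<in> {0..1} \<Longrightarrow> \<bar>h t\<bar> \<le> M"
    and x: "x \<in> {0..1}" and "0 \<le> \<epsilon>"
    and cont: "\<And>t. t \<in> {0..1} \<Longrightarrow> \<bar>t - x\<bar> < \<delta> \<Longrightarrow> \<bar>h t - h x\<bar> \<le> \<epsilon>"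
    and y: "y \<in> {0..1}" and "n > 0" and close: "1 / real (n + 1) + \<bar>y - x\<bar> \<le> \<delta> / 2"
  shows "\<bar>kantorovich n h y - h x\<bar> \<le> \<epsilon> + 2 * M / (\<delta>\<^sup>2 * real n)"
proof -
  define A where "A k = real (n + 1) * integral (kantorovich_cell n k) h" for k
  have "0 < 1 / real (n + 1)"
    by simp
  with close have "\<delta> > 0"
    using abs_ge_zero[of "y - x"] by linarith
  have "kantorovich n h y - h x = (\<Sum>k\<le>n. Bernstein n k y * (A k - h x))"
    by (simp add: kantorovich_def A_def right_diff_distrib sum_subtractf flip: sum_distrib_right)
  also have "\<bar>\<dots>\<bar> \<le> \<epsilon> + 2 * M / (4 * (\<delta> / 2)\<^sup>2 * real n)"
  proof (rule Bernstein_sum_localized_bound)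
    fix k assume "k \<le> n"
    have "\<bar>A k - 0\<bar> \<le> M"
      unfolding A_def
    proof (rule kantorovich_coeff_dev_le[OF \<open>k \<le> n\<close> hint])
      fix t assume "t \<in> kantorovich_cell n k"
      then have "t \<in> {0..1}"
        by (rule subsetD[OF kantorovich_cell_subset[OF \<open>k \<le> n\<close>]])
      then show "\<bar>h t - 0\<bar> \<le> M"
        using hM by simp
    qed
    then show "\<bar>A k - h x\<bar> \<le> 2 * M"
      using hM[OF x] by linarith
    assume near: "\<bar>y - real k / real n\<bar> < \<delta> / 2"
    have "\<bar>h t - h x\<bar> \<le> \<epsilon>" if t: "t \<in> kantorovich_cell n k" for t
    proof (rule cont)
      show "t \<in> {0..1}"
        using t by (rule subsetD[OF kantorovich_cell_subset[OF \<open>k \<le> n\<close>]])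
      show "\<bar>t - x\<bar> < \<delta>"
        using kantorovich_cell_dist[OF \<open>k \<le> n\<close> \<open>n > 0\<close> t] near close by linarith
    qed
    then show "\<bar>A k - h x\<bar> \<le> \<epsilon>"
      unfolding A_def by (rule kantorovich_coeff_dev_le[OF \<open>k \<le> n\<close> hint])
  qed (use y \<open>n > 0\<close> \<open>\<delta> > 0\<close> \<open>0 \<le> \<epsilon>\<close> in auto)
  also have "\<dots> = \<epsilon> + 2 * M / (\<delta>\<^sup>2 * real n)"
    by (simp add: power_divide)
  finally show ?thesis .
qed

lemma a_seq_bounds:
  assumes "0 \<le> \<mu>" "m > 0" "x \<in> {0..1}"
  shows "a_seq \<mu> m x \<in> {0..1}" "\<bar>a_seq \<mu> m x - x\<bar> \<le> 1 / real m"
proof -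
  define t where "t = 1 / (real m * (1 + \<mu>))"
  have a: "a_seq \<mu> m x = ln (1 + t * x) / ln (1 + t)"
    by (simp add: a_seq_def t_def)
  have "t > 0"
    using assms by (simp add: t_def)
  have "real m \<le> real m * (1 + \<mu>)"
    using assms by simp
  then have "t \<le> 1 / real m"
    unfolding t_def using assms by (intro divide_left_mono) (auto intro!: mult_pos_pos)
  have "t * x \<le> t"
    using assms(3) \<open>t > 0\<close> mult_left_le[of x t] by simp
  then have "ln (1 + t * x) \<le> ln (1 + t)"
    using assms(3) \<open>t > 0\<close> by (subst ln_le_cancel_iff) (auto intro: add_pos_nonneg)
  then show "a_seq \<mu> m x \<in> {0..1}"
    using ln_one_plus_ratio_ge[OF \<open>t > 0\<close>] assms(3) \<open>t > 0\<close> by (auto simp: a)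
  have "(1 + t) * x \<le> x + 1 / real m"
    using \<open>t * x \<le> t\<close> \<open>t \<le> 1 / real m\<close> by (simp add: algebra_simps)
  then show "\<bar>a_seq \<mu> m x - x\<bar> \<le> 1 / real m"
    using ln_one_plus_ratio_ge[OF \<open>t > 0\<close>] ln_one_plus_ratio_le[OF \<open>t > 0\<close>, of x] assms(3)
    by (simp add: a abs_le_iff)
qed

lemma ln_mu_bounds:
  assumes "0 \<le> \<mu>" "x \<in> {0..1}"
  shows "ln (1 + \<mu>) \<le> ln_mu \<mu> x" "ln_mu \<mu> x \<le> ln (2 + \<mu>)"
  using assms by (simp_all add: ln_mu_def)

lemma f_mu_bound:
  assumes "\<mu> > 0" "\<And>t. t \<in> {0..1} \<Longrightarrow> \<bar>f t\<bar> \<le> B" "x \<in> {0..1}"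
  shows "\<bar>f_mu \<mu> f x\<bar> \<le> B / ln (1 + \<mu>)"
proof -
  have "0 \<le> B"
    using assms(2,3) by force
  have "0 < ln (1 + \<mu>)" "ln (1 + \<mu>) \<le> ln_mu \<mu> x"
    using assms ln_mu_bounds(1)[of \<mu> x] by auto
  then have "\<bar>f x\<bar> / ln_mu \<mu> x \<le> B / ln (1 + \<mu>)"
    using assms(2,3) \<open>0 \<le> B\<close> by (intro frac_le) auto
  then show ?thesis
    using \<open>0 < ln (1 + \<mu>)\<close> \<open>ln (1 + \<mu>) \<le> ln_mu \<mu> x\<close> by (simp add: f_mu_def abs_divide)
qed

lemma f_mu_integrable:
  assumes "\<mu> > 0" "bounded (f ` {0..1})" "f integrable_on {0..1}"
  shows "f_mu \<mu> f integrable_on {0..1}"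
proof -
  obtain B where "\<forall>x\<in>{0..1}. \<bar>f x\<bar> \<le> B"
    using assms(2) by (auto simp: bounded_iff)
  then have "f absolutely_integrable_on {0..1}"
    using assms(3) by (intro absolutely_integrable_integrable_bound[where g = "\<lambda>_. B"]) auto
  moreover have cont: "continuous_on {0..1} (\<lambda>x. 1 / ln_mu \<mu> x)"
    using assms(1) unfolding ln_mu_def by (intro continuous_intros) auto
  then have "(\<lambda>x. 1 / ln_mu \<mu> x) \<in> borel_measurable (lebesgue_on {0..1})"
    by (rule continuous_imp_measurable_on_sets_lebesgue) auto
  moreover have "bounded ((\<lambda>x. 1 / ln_mu \<mu> x) ` {0..1})"
    using compact_continuous_image[OF cont] by (auto intro: compact_imp_bounded)
  ultimately have "(\<lambda>x. 1 / ln_mu \<mu> x * f x) absolutely_integrable_on {0..1}"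
    by (intro absolutely_integrable_bounded_measurable_product_real) auto
  then show ?thesis
    by (simp add: f_mu_def[abs_def] absolutely_integrable_on_def)
qed

lemma continuous_within_f_mu:
  assumes "\<mu> > 0" "0 \<le> x" "continuous (at x within S) f"
  shows "continuous (at x within S) (f_mu \<mu> f)"
  unfolding f_mu_def[abs_def] ln_mu_def using assms by (intro continuous_intros) auto

lemma bern_eq_Bernstein: "bern = Bernstein"
  by (intro ext) (simp add: bern_def Bernstein_def)

lemma KL_eq_kantorovich:
  "KL \<mu> n f x = ln_mu \<mu> x * kantorovich n (f_mu \<mu> f) (a_seq \<mu> (n + 1) x)"
  by (simp add: KL_def kantorovich_def kantorovich_cell_def bern_eq_Bernstein atLeast0AtMost)

lemma KL_dev_le:
  fixes f :: "real \<Rightarrow> real"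
  assumes "\<mu> > 0" and hint: "f_mu \<mu> f integrable_on {0..1}"
    and hM: "\<And>t. t \<in> {0..1} \<Longrightarrow> \<bar>f_mu \<mu> f t\<bar> \<le> M"
    and x: "x \<in> {0..1}" and "0 \<le> \<epsilon>"
    and cont: "\<And>t. t \<in> {0..1} \<Longrightarrow> \<bar>t - x\<bar> < \<delta> \<Longrightarrow> \<bar>f_mu \<mu> f t - f_mu \<mu> f x\<bar> \<le> \<epsilon>"
    and "n > 0" and n_large: "4 / real n \<le> \<delta>"
  shows "\<bar>KL \<mu> n f x - f x\<bar> \<le> ln (2 + \<mu>) * (\<epsilon> + 2 * M / (\<delta>\<^sup>2 * real n))"
proof -
  define y where "y = a_seq \<mu> (n + 1) x"
  have y: "y \<in> {0..1}" "\<bar>y - x\<bar> \<le> 1 / real (n + 1)"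
    using a_seq_bounds[of \<mu> "n + 1" x] assms(1) x by (simp_all add: y_def)
  have "2 / real (n + 1) \<le> 2 / real n"
    using \<open>n > 0\<close> by (intro divide_left_mono) auto
  then have close: "1 / real (n + 1) + \<bar>y - x\<bar> \<le> \<delta> / 2"
    using y(2) n_large by simp
  have L: "0 < ln_mu \<mu> x" "ln_mu \<mu> x \<le> ln (2 + \<mu>)"
    using ln_mu_bounds[of \<mu> x] assms(1) x by (auto intro: less_le_trans[of 0 "ln (1 + \<mu>)"])
  have "f x = ln_mu \<mu> x * f_mu \<mu> f x"
    using L(1) by (simp add: f_mu_def)
  then have "\<bar>KL \<mu> n f x - f x\<bar> = ln_mu \<mu> x * \<bar>kantorovich n (f_mu \<mu> f) y - f_mu \<mu> f x\<bar>"
    using L(1) by (simp add: KL_eq_kantorovich y_def abs_mult flip: right_diff_distrib)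
  also have "\<dots> \<le> ln (2 + \<mu>) * (\<epsilon> + 2 * M / (\<delta>\<^sup>2 * real n))"
    using kantorovich_dev_le[OF hint hM x \<open>0 \<le> \<epsilon>\<close> cont y(1) \<open>n > 0\<close> close] L
    by (intro mult_mono) auto
  finally show ?thesis .
qed

lemma KL_uniform_limit:
  fixes f :: "real \<Rightarrow> real"
  assumes "\<mu> > 0" "bounded (f ` {0..1})" "f integrable_on {0..1}" "S \<subseteq> {0..1}"
    and equicont: "\<And>e. e > 0 \<Longrightarrow>
      \<exists>d>0. \<forall>x\<in>S. \<forall>t\<in>{0..1}. dist t x < d \<longrightarrow> dist (f_mu \<mu> f t) (f_mu \<mu> f x) < e"
  shows "uniform_limit S (\<lambda>n. KL \<mu> n f) f sequentially"
proof (rule uniform_limitI)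
  fix e :: real assume "e > 0"
  obtain B where "\<forall>x\<in>{0..1}. \<bar>f x\<bar> \<le> B"
    using assms(2) by (auto simp: bounded_iff)
  define M where "M = B / ln (1 + \<mu>)"
  have hM: "\<bar>f_mu \<mu> f t\<bar> \<le> M" if "t \<in> {0..1}" for t
    unfolding M_def using f_mu_bound[OF assms(1) _ that] \<open>\<forall>x\<in>{0..1}. \<bar>f x\<bar> \<le> B\<close> by blast
  have hint: "f_mu \<mu> f integrable_on {0..1}"
    using f_mu_integrable[OF assms(1-3)] .
  define \<epsilon> where "\<epsilon> = e / (2 * ln (2 + \<mu>))"
  have "0 < ln (2 + \<mu>)"
    using assms(1) by simp
  then have "\<epsilon> > 0"
    using \<open>e > 0\<close> by (simp add: \<epsilon>_def)
  then obtain \<delta> where "\<delta> > 0"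
    and \<delta>: "\<forall>x\<in>S. \<forall>t\<in>{0..1}. dist t x < \<delta> \<longrightarrow> dist (f_mu \<mu> f t) (f_mu \<mu> f x) < \<epsilon>"
    using equicont by blast
  have "eventually (\<lambda>n. 4 / real n < \<delta>) sequentially"
    using order_tendstoD(2)[OF lim_const_over_n \<open>\<delta> > 0\<close>] .
  moreover have "eventually (\<lambda>n. (2 * M / \<delta>\<^sup>2) / real n < \<epsilon>) sequentially"
    using order_tendstoD(2)[OF lim_const_over_n \<open>\<epsilon> > 0\<close>] .
  ultimately have "eventually (\<lambda>n. n > 0 \<and> 4 / real n < \<delta> \<and> 2 * M / (\<delta>\<^sup>2 * real n) < \<epsilon>) sequentially"
    using eventually_gt_at_top[of 0] by eventually_elim simp
  then show "eventually (\<lambda>n. \<forall>x\<in>S. dist (KL \<mu> n f x) (f x) < e) sequentially"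
  proof (rule eventually_mono)
    fix n assume n: "n > 0 \<and> 4 / real n < \<delta> \<and> 2 * M / (\<delta>\<^sup>2 * real n) < \<epsilon>"
    show "\<forall>x\<in>S. dist (KL \<mu> n f x) (f x) < e"
    proof
      fix x assume "x \<in> S"
      then have x: "x \<in> {0..1}"
        using assms(4) by blast
      have cont: "\<bar>f_mu \<mu> f t - f_mu \<mu> f x\<bar> \<le> \<epsilon>" if "t \<in> {0..1}" "\<bar>t - x\<bar> < \<delta>" for t
        using \<delta> \<open>x \<in> S\<close> that by (force simp: dist_real_def)
      have "\<bar>KL \<mu> n f x - f x\<bar> \<le> ln (2 + \<mu>) * (\<epsilon> + 2 * M / (\<delta>\<^sup>2 * real n))"
        using KL_dev_le[OF assms(1) hint hM x _ cont] \<open>\<epsilon> > 0\<close> n by auto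
      also have "\<dots> < ln (2 + \<mu>) * (2 * \<epsilon>)"
        using n \<open>0 < ln (2 + \<mu>)\<close> by (intro mult_strict_left_mono) auto
      also have "\<dots> = e"
        using \<open>0 < ln (2 + \<mu>)\<close> by (simp add: \<epsilon>_def)
      finally show "dist (KL \<mu> n f x) (f x) < e"
        by (simp add: dist_real_def)
    qed
  qed
qed

theorem theorem3p1:
  fixes \<mu> :: real and f g :: "real \<Rightarrow> real"
  assumes mu: "\<mu> > 0"
    and bdd: "bounded (f ` {0..1})"
    and intf: "f integrable_on {0..1}"
    and contg: "continuous_on {0..1} g"
  shows "(\<forall>x\<in>{0..1}. continuous (at x within {0..1}) f \<longrightarrow> (\<lambda>n. KL \<mu> n f x) \<longlonglongrightarrow> f x)
       \<and> uniform_limit {0..1} (\<lambda>n x. KL \<mu> n g x) g sequentially"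
proof (intro conjI ballI impI)
  fix x :: real assume x: "x \<in> {0..1}" and "continuous (at x within {0..1}) f"
  then have "continuous (at x within {0..1}) (f_mu \<mu> f)"
    using mu by (intro continuous_within_f_mu) auto
  then have "uniform_limit {x} (\<lambda>n. KL \<mu> n f) f sequentially"
    using x by (intro KL_uniform_limit[OF mu bdd intf]) (auto simp: continuous_within_eps_delta)
  then show "(\<lambda>n. KL \<mu> n f x) \<longlonglongrightarrow> f x"
    by simp
next
  have "continuous_on {0..1} (f_mu \<mu> g)"
    using contg mu by (auto simp: continuous_on_eq_continuous_within intro: continuous_within_f_mu)
  then have "uniformly_continuous_on {0..1} (f_mu \<mu> g)"
    by (intro compact_uniformly_continuous) auto
  moreover have "bounded (g ` {0..1})"
    using compact_continuous_image[OF contg] by (auto intro: compact_imp_bounded)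
  ultimately show "uniform_limit {0..1} (\<lambda>n x. KL \<mu> n g x) g sequentially"
    using integrable_continuous_interval[OF contg]
    by (intro KL_uniform_limit[OF mu]) (auto simp: uniformly_continuous_on_def)
qed

end
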